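(* Let $p\in[\tfrac12,1)$ and $q:=1-p$. Every $x\in\mathcal{M}_p:=\{\sum_{i\in\mathbb{N}}b_ipq^{i-1}: b_i\in\{0,1\},\ 1\le\sum_{i\in\mathbb{N}}b_i<\infty\}$ has a unique representation in $\mathcal{M}_p$, i.e. if $\sum_{i}b_ipq^{i-1}=\sum_i b_i'pq^{i-1}$ with both sequences $(b_i),(b_i')$ as in the definition of $\mathcal{M}_p$, then $b_i=b_i'$ for all $i$. *)

theory Defs
  imports "HOL-Analysis.Analysis"
begin

end

theory Submission
  imports Defs
begin

text \<open>For \<open>0 < q \<le> 1/2\<close> each weight \<open>q\<^sup>m\<close> strictly exceeds the sum of all smaller weights,
  because \<open>2 q\<^sup>k\<^sup>+\<^sup>1 \<le> q\<^sup>k\<close>.  Hence two finite 0/1 digit sequences with the same weighted sum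
  cannot first differ at any position: the one with digit 1 there is strictly larger.
  The sum \<open>\<Sum> b\<^sub>i p q\<^sup>i\<^sup>-\<^sup>1\<close> is \<open>p\<close> times such a weighted sum, and \<open>p > 0\<close>.\<close>

lemma sum_power_tail_plus_last_le:
  fixes q :: real
  assumes "0 \<le> q" "2 * q \<le> 1"
  shows "(\<Sum>i\<in>{Suc m..<m + Suc k}. q ^ i) + q ^ (m + k) \<le> q ^ m"
proof (induction k)
  case 0
  then show ?case by simp
next
  case (Suc k)
  have "2 * q ^ Suc (m + k) \<le> q ^ (m + k)"
    using mult_right_mono[OF assms(2) zero_le_power[OF assms(1), of "m + k"]] by simp
  then show ?case using Suc by simp
qed

lemma sum_power_tail_less:
  fixes q :: real
  assumes "0 < q" "2 * q \<le> 1"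
  shows "(\<Sum>i\<in>{Suc m..<N}. q ^ i) < q ^ m"
proof -
  have "(\<Sum>i\<in>{Suc m..<N}. q ^ i) \<le> (\<Sum>i\<in>{Suc m..<m + Suc (N - m)}. q ^ i)"
    using assms(1) by (intro sum_mono2) auto
  also have "\<dots> \<le> q ^ m - q ^ (m + (N - m))"
    using sum_power_tail_plus_last_le[of q m "N - m"] assms by simp
  also have "\<dots> < q ^ m"
    using assms(1) by simp
  finally show ?thesis .
qed

lemma sum_binary_digits_less:
  fixes q :: real and c d :: "nat \<Rightarrow> nat"
  assumes q: "0 < q" "2 * q \<le> 1" and "m < N"
    and agree: "\<forall>i<m. c i = d i" and "c m = 1" "d m = 0"
    and d_digits: "\<forall>i<N. d i \<le> 1"
  shows "(\<Sum>i<N. real (d i) * q ^ i) < (\<Sum>i<N. real (c i) * q ^ i)"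
proof -
  have split: "(\<Sum>i<N. real (e i) * q ^ i) = (\<Sum>i<m. real (e i) * q ^ i)
      + real (e m) * q ^ m + (\<Sum>i\<in>{Suc m..<N}. real (e i) * q ^ i)" for e :: "nat \<Rightarrow> nat"
    using \<open>m < N\<close> sum.atLeastLessThan_concat[of 0 m N "\<lambda>i. real (e i) * q ^ i"]
      sum.atLeast_Suc_lessThan[of m N "\<lambda>i. real (e i) * q ^ i"]
    by (simp add: atLeast0LessThan)
  have "(\<Sum>i<m. real (d i) * q ^ i) = (\<Sum>i<m. real (c i) * q ^ i)"
    using agree by simp
  moreover have "(\<Sum>i\<in>{Suc m..<N}. real (d i) * q ^ i) \<le> (\<Sum>i\<in>{Suc m..<N}. q ^ i)"
    using d_digits q(1) by (intro sum_mono) (auto intro: mult_left_le_one_le)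
  moreover have "(\<Sum>i\<in>{Suc m..<N}. q ^ i) < q ^ m"
    using sum_power_tail_less[OF q] .
  moreover have "0 \<le> (\<Sum>i\<in>{Suc m..<N}. real (c i) * q ^ i)"
    using q(1) by (intro sum_nonneg) auto
  ultimately show ?thesis
    using split[of c] split[of d] \<open>c m = 1\<close> \<open>d m = 0\<close> by simp
qed

lemma sum_binary_digits_inj:
  fixes q :: real and c d :: "nat \<Rightarrow> nat"
  assumes q: "0 < q" "2 * q \<le> 1"
    and digits: "\<forall>i<N. c i \<le> 1" "\<forall>i<N. d i \<le> 1"
    and eq: "(\<Sum>i<N. real (c i) * q ^ i) = (\<Sum>i<N. real (d i) * q ^ i)"
  shows "\<forall>i<N. c i = d i"
proof (rule ccontr)
  assume "\<not> (\<forall>i<N. c i = d i)"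
  then have ex: "\<exists>i. i < N \<and> c i \<noteq> d i" by auto
  define m where "m = (LEAST i. i < N \<and> c i \<noteq> d i)"
  have m: "m < N" "c m \<noteq> d m"
    using LeastI_ex[OF ex] unfolding m_def by auto
  have agree: "\<forall>i<m. c i = d i"
    using not_less_Least[of _ "\<lambda>i. i < N \<and> c i \<noteq> d i"] m(1) unfolding m_def
    by (meson order.strict_trans)
  have "c m \<le> 1" "d m \<le> 1"
    using m(1) digits by auto
  then have "c m = 1 \<and> d m = 0 \<or> d m = 1 \<and> c m = 0"
    using m(2) by linarith
  then show False
  proof
    assume "c m = 1 \<and> d m = 0"
    then show False
      using sum_binary_digits_less[OF q m(1) agree _ _ digits(2)] eq by simp
  next
    assume "d m = 1 \<and> c m = 0"
    then show False
      using sum_binary_digits_less[OF q m(1) _ _ _ digits(1), of d] agree eq by simp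
  qed
qed

lemma sum_support_eq_shifted_sum:
  fixes p q :: real and c :: "nat \<Rightarrow> nat"
  assumes "{i. i \<ge> 1 \<and> c i \<noteq> 0} \<subseteq> {..N}"
  shows "(\<Sum>i\<in>{i. i \<ge> 1 \<and> c i \<noteq> 0}. real (c i) * p * q ^ (i - 1))
       = p * (\<Sum>i<N. real (c (Suc i)) * q ^ i)"
proof -
  have "(\<Sum>i\<in>{i. i \<ge> 1 \<and> c i \<noteq> 0}. real (c i) * p * q ^ (i - 1))
      = (\<Sum>i\<in>{1..N}. real (c i) * p * q ^ (i - 1))"
    using assms by (intro sum.mono_neutral_left) auto
  also have "\<dots> = (\<Sum>i<N. real (c (Suc i)) * p * q ^ i)"
    by (simp add: sum.atLeast1_atMost_eq)
  also have "\<dots> = p * (\<Sum>i<N. real (c (Suc i)) * q ^ i)"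
    by (simp add: sum_distrib_left algebra_simps)
  finally show ?thesis .
qed

theorem lemma5:
  fixes p q :: real and b b' :: "nat \<Rightarrow> nat"
  assumes "1/2 \<le> p" and "p < 1" and "q = 1 - p"
    and "\<forall>i\<ge>1. b i \<in> {0, 1}" and "\<forall>i\<ge>1. b' i \<in> {0, 1}"
    and "finite {i. i \<ge> 1 \<and> b i \<noteq> 0}" and "{i. i \<ge> 1 \<and> b i \<noteq> 0} \<noteq> {}"
    and "finite {i. i \<ge> 1 \<and> b' i \<noteq> 0}" and "{i. i \<ge> 1 \<and> b' i \<noteq> 0} \<noteq> {}"
    and "(\<Sum>i\<in>{i. i \<ge> 1 \<and> b i \<noteq> 0}. real (b i) * p * q ^ (i - 1))
       = (\<Sum>i\<in>{i. i \<ge> 1 \<and> b' i \<noteq> 0}. real (b' i) * p * q ^ (i - 1))"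
  shows "\<forall>i\<ge>1. b i = b' i"
proof (intro allI impI)
  fix i :: nat
  assume "i \<ge> 1"
  have "finite ({i. i \<ge> 1 \<and> b i \<noteq> 0} \<union> {i. i \<ge> 1 \<and> b' i \<noteq> 0})"
    using assms(6,8) by blast
  then obtain N where N: "{i. i \<ge> 1 \<and> b i \<noteq> 0} \<union> {i. i \<ge> 1 \<and> b' i \<noteq> 0} \<subseteq> {..N}"
    using finite_nat_iff_bounded_le by blast
  have q: "0 < q" "2 * q \<le> 1"
    using assms(1-3) by auto
  have "p * (\<Sum>k<N. real (b (Suc k)) * q ^ k) = p * (\<Sum>k<N. real (b' (Suc k)) * q ^ k)"
    using assms(10) N sum_support_eq_shifted_sum[of b N p q] sum_support_eq_shifted_sum[of b' N p q]
    by simp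
  then have "(\<Sum>k<N. real (b (Suc k)) * q ^ k) = (\<Sum>k<N. real (b' (Suc k)) * q ^ k)"
    using assms(1) by simp
  moreover have "b (Suc k) \<le> 1 \<and> b' (Suc k) \<le> 1" for k
    using assms(4,5)[rule_format, of "Suc k"] by auto
  ultimately have "\<forall>k<N. b (Suc k) = b' (Suc k)"
    using sum_binary_digits_inj[OF q, of N "b \<circ> Suc" "b' \<circ> Suc"] by simp
  moreover have "b i = 0 \<and> b' i = 0" if "i \<notin> {..N}"
    using N \<open>i \<ge> 1\<close> that by blast
  moreover obtain k where "i = Suc k"
    using \<open>i \<ge> 1\<close> not0_implies_Suc by fastforce
  ultimately show "b i = b' i"
    by (cases "k < N") simp_all
qed

end
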